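(* Let $Q$ be a fixed positive integer and let $k$ be any positive integer. Then for every integer $i$, \[ \nu_k(\gamma_i)=\left(\frac{2k-1}{2}\right)K_{k-1}\Big(-\nu_2(\gamma_i),\ \nu_2(\gamma_{i+1}),\ \ldots,\ (-1)^{k-1}\nu_2(\gamma_{i+k-2})\Big), \] where the $j$-th argument of $K_{k-1}$ (for $1\le j\le k-1$) is $(-1)^j\nu_2(\gamma_{i+j-1})$ (for $k=1$ the right-hand side is $\left(\frac{1}{2}\right)K_0=1$).
   Context: For $Q\in\mathbb{N}$, the Farey fractions of order $Q$ are $\mathcal{F}_Q=\{a/q\in\mathbb{Q}: 1\le q\le Q,\ 0<a\le q,\ \gcd(a,q)=1\}$. Write $\mathcal{F}_Q=\{\gamma_1,\ldots,\gamma_{N(Q)}\}$ with $1/Q=\gamma_1<\gamma_2<\cdots<\gamma_{N(Q)}=1$, and extend to all $i\in\mathbb{Z}$ by $\gamma_{i+N(Q)}=\gamma_i+1$. For each $i$ write $\gamma_i=p_i/q_i$ in lowest terms with $q_i>0$. For a positive integer $k$, the $k$-index of $\gamma_i$ is $\nu_k(\gamma_i)=p_{i+k-1}q_{i-1}-p_{i-1}q_{i+k-1}$ (this depends on $Q$; note $\nu_1\equiv1$). The convergent polynomials are defined by $K_0=1$, $K_1(x_1)=x_1$, and $K_n(x_1,\ldots,x_n)=x_nK_{n-1}(x_1,\ldots,x_{n-1})+K_{n-2}(x_1,\ldots,x_{n-2})$ for $n\ge2$. The Kronecker symbol $\left(\frac{n}{2}\right)$ is $0$ if $n$ is even, $1$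 if $n\equiv\pm1\pmod 8$, and $-1$ if $n\equiv\pm3\pmod 8$. *)

theory Defs
  imports Complex_Main
begin

definition farey_set :: "nat \<Rightarrow> rat set" where
  "farey_set Q = {r. 0 < r \<and> r \<le> 1 \<and> snd (quotient_of r) \<le> int Q}"

definition farey_N :: "nat \<Rightarrow> nat" where
  "farey_N Q = card (farey_set Q)"

(* gamma_i for i \<in> \<int>, with gamma_1 < ... < gamma_N = 1 and gamma_{i+N} = gamma_i + 1 *)
definition farey_gamma :: "nat \<Rightarrow> int \<Rightarrow> rat" where
  "farey_gamma Q i =
     sorted_list_of_set (farey_set Q) ! nat ((i - 1) mod int (farey_N Q))
     + of_int ((i - 1) div int (farey_N Q))"

definition farey_p :: "nat \<Rightarrow> int \<Rightarrow> int" where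
  "farey_p Q i = fst (quotient_of (farey_gamma Q i))"

definition farey_q :: "nat \<Rightarrow> int \<Rightarrow> int" where
  "farey_q Q i = snd (quotient_of (farey_gamma Q i))"

definition farey_nu :: "nat \<Rightarrow> nat \<Rightarrow> int \<Rightarrow> int" where
  "farey_nu Q k i = farey_p Q (i + int k - 1) * farey_q Q (i - 1)
                    - farey_p Q (i - 1) * farey_q Q (i + int k - 1)"

(* convergent polynomials K_n(x_1,...,x_n); arguments given as x 1, ..., x n *)
fun convK :: "nat \<Rightarrow> (nat \<Rightarrow> int) \<Rightarrow> int" where
  "convK 0 x = 1"
| "convK (Suc 0) x = x 1"
| "convK (Suc (Suc n)) x = x (n + 2) * convK (Suc n) x + convK n x"

definition kron2 :: "int \<Rightarrow> int" where
  "kron2 n = (if even n then 0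
              else if n mod 8 = 1 \<or> n mod 8 = 7 then 1 else -1)"

end

theory Submission
  imports Defs
begin

(* Consecutive Farey fractions a/b < c/d satisfy bc - ad = 1, and so do 1/1 and 1 + 1/Q; hence
   p(i+1) q(i) - p(i) q(i+1) = 1 for every integer i.  For such a chain of unimodular vectors the
   Pluecker relation for 2x2 determinants gives the three-term recurrence
   nu(n+2, i) = nu(2, i+n) nu(n+1, i) - nu(n, i), with nu(0, i) = 0 and nu(1, i) = 1.  Its solution
   is a continuant in the coefficients with alternating signs, times the sign s(n) = (2n+1 / 2);
   the sign rule s(n+1) = (-1)^(n+1) s(n) is exactly what converts the minus sign of the
   recurrence into the plus sign of the continuant recurrence. *)

lemma quotient_of_int_div:
  assumes "0 < b" and "coprime a b"
  shows "quotient_of (of_int a / of_int b) = (a, b)"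
  using assms by (simp add: Fract_of_int_quotient[symmetric] quotient_of_Fract)

lemma quotient_of_add_of_int:
  assumes "quotient_of r = (a, b)"
  shows "quotient_of (r + of_int t) = (a + t * b, b)"
proof -
  have b: "0 < b" "coprime a b"
    using quotient_of_denom_pos quotient_of_coprime assms by blast+
  have "r + of_int t = of_int (a + t * b) / of_int b"
    using quotient_of_div[OF assms] b by (simp add: field_simps)
  moreover have "coprime (a + t * b) b"
    using b(2) by (metis coprime_iff_gcd_eq_1 gcd.commute gcd_add_mult add.commute)
  ultimately show ?thesis
    using quotient_of_int_div[of b "a + t * b"] b(1) by simp
qed

lemma of_int_div_less_iff:
  assumes "0 < b" and "0 < d"
  shows "(of_int a / of_int b < (of_int c / of_int d :: rat)) \<longleftrightarrow> a * d < c * b"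
proof -
  have "(of_int a / of_int b < (of_int c / of_int d :: rat)) \<longleftrightarrow> of_int (a * d) < (of_int (c * b) :: rat)"
    using assms by (simp add: field_simps)
  then show ?thesis by (simp only: of_int_less_iff)
qed

lemma farey_set_quotient_of:
  assumes "r \<in> farey_set Q" and "quotient_of r = (a, b)"
  shows "1 \<le> a" "a \<le> b" "b \<le> int Q" "0 < b" "coprime a b" "r = of_int a / of_int b"
proof -
  show b: "0 < b" and r: "r = of_int a / of_int b" and "coprime a b"
    using quotient_of_denom_pos quotient_of_div quotient_of_coprime assms(2) by blast+
  show "b \<le> int Q" using assms unfolding farey_set_def by auto
  have "0 < r" "r \<le> 1" using assms(1) unfolding farey_set_def by auto
  then show "1 \<le> a" "a \<le> b" using b r by (auto simp: field_simps)
qed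

lemma finite_farey_set: "finite (farey_set Q)"
proof (rule finite_subset)
  show "farey_set Q \<subseteq> (\<lambda>(a, b). of_int a / of_int b) ` ({1..int Q} \<times> {1..int Q})"
  proof
    fix r assume r: "r \<in> farey_set Q"
    obtain a b where ab: "quotient_of r = (a, b)" by fastforce
    from farey_set_quotient_of[OF r ab]
    show "r \<in> (\<lambda>(a, b). of_int a / of_int b) ` ({1..int Q} \<times> {1..int Q})"
      by (intro image_eqI[where x = "(a, b)"]) auto
  qed
qed auto

lemma bezout_solution_in_window:
  fixes a b Q :: int
  assumes "coprime a b" and "0 < b"
  obtains x y where "b * x - a * y = 1" and "Q - b < y" and "y \<le> Q"
proof -
  obtain u v where uv: "u * a + v * b = 1"
    using assms(1) by (metis bezout_int coprime_iff_gcd_eq_1)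
  define t where "t = (Q + u) div b"
  have "b * (v + t * a) - a * (t * b - u) = 1"
    using uv by (simp add: algebra_simps)
  moreover have "t * b - u = Q - (Q + u) mod b"
    unfolding t_def by (simp add: algebra_simps minus_div_mult_eq_mod[symmetric])
  moreover have "0 \<le> (Q + u) mod b" "(Q + u) mod b < b"
    using assms(2) by auto
  ultimately show thesis
    by (intro that[of "v + t * a" "t * b - u"]) auto
qed

lemma det_one_denominator_bound:
  fixes a b c d x y :: int
  assumes "b * x - a * y = 1" and "0 < b" and "0 < y"
    and "a * d < c * b" and "c * y < x * d"
  shows "b + y \<le> d"
proof -
  have "d * (b * x - a * y) = b * (x * d - c * y) + y * (c * b - a * d)"
    by (simp add: algebra_simps)
  then have "d = b * (x * d - c * y) + y * (c * b - a * d)"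
    using assms(1) by simp
  moreover have "b * (x * d - c * y) \<ge> b" "y * (c * b - a * d) \<ge> y"
    using assms(2-5) by simp_all
  ultimately show ?thesis by linarith
qed

lemma farey_neighbours_det:
  assumes r: "r \<in> farey_set Q" and s: "s \<in> farey_set Q" and "r < s"
    and no_between: "\<forall>z\<in>farey_set Q. \<not> (r < z \<and> z < s)"
    and qr: "quotient_of r = (a, b)" and qs: "quotient_of s = (c, d)"
  shows "b * c - a * d = 1"
proof -
  note R = farey_set_quotient_of[OF r qr] and S = farey_set_quotient_of[OF s qs]
  obtain x y where xy: "b * x - a * y = 1" and y: "int Q - b < y" "y \<le> int Q"
    using bezout_solution_in_window R(4,5) by blast
  have "0 < y" using y R(3) by linarith
  have "coprime x y"
  proof (rule coprimeI)
    fix e assume "e dvd x" "e dvd y"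
    then have "e dvd b * x - a * y" by simp
    then show "is_unit e" using xy by simp
  qed
  txt \<open>\<open>w = x/y\<close> is the candidate successor of \<open>a/b\<close>: every fraction strictly between them
    has denominator at least \<open>b + y > Q\<close>.\<close>
  define w where "w = (of_int x / of_int y :: rat)"
  have qw: "quotient_of w = (x, y)"
    unfolding w_def using quotient_of_int_div \<open>0 < y\<close> \<open>coprime x y\<close> by blast
  have "a * y < x * b"
    using xy by (simp add: mult.commute)
  then have "r < w"
    unfolding w_def R(6) using of_int_div_less_iff R(4) \<open>0 < y\<close> by simp
  have "r < 1"
    using \<open>r < s\<close> s unfolding farey_set_def by auto
  then have "a < b"
    using R(4,6) by (simp add: field_simps)
  then have "a * y \<le> (b - 1) * y"
    using \<open>0 < y\<close> by (intro mult_right_mono) auto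
  then have "b * x \<le> b * y"
    using xy \<open>0 < y\<close> by (simp add: algebra_simps)
  then have "w \<le> 1"
    unfolding w_def using R(4) \<open>0 < y\<close> by simp
  then have "w \<in> farey_set Q"
    using \<open>r < w\<close> r qw y(2) unfolding farey_set_def by auto
  then have "s \<le> w"
    using no_between \<open>r < w\<close> by force
  show ?thesis
  proof (cases "s = w")
    case True
    then show ?thesis using qs qw xy by simp
  next
    case False
    with \<open>s \<le> w\<close> have "s < w" by simp
    then have "c * y < x * d"
      unfolding w_def S(6) using of_int_div_less_iff S(4) \<open>0 < y\<close> by simp
    moreover have "a * d < c * b"
      using \<open>r < s\<close> unfolding R(6) S(6) using of_int_div_less_iff R(4) S(4) by simp
    ultimately have "b + y \<le> d"
      using det_one_denominator_bound xy R(4) \<open>0 < y\<close> by blast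
    then show ?thesis using y S(3) by linarith
  qed
qed

lemma one_mem_farey_set: "1 \<in> farey_set Q \<longleftrightarrow> 1 \<le> Q"
  unfolding farey_set_def by auto

lemma quotient_of_inverse_of_nat: "1 \<le> Q \<Longrightarrow> quotient_of (1 / of_nat Q :: rat) = (1, int Q)"
  using quotient_of_int_div[of "int Q" 1] by simp

lemma inverse_mem_farey_set: "1 \<le> Q \<Longrightarrow> 1 / of_nat Q \<in> farey_set Q"
  unfolding farey_set_def using quotient_of_inverse_of_nat[of Q] by simp

lemma farey_set_ge_inverse:
  assumes "r \<in> farey_set Q"
  shows "1 / of_nat Q \<le> r"
proof -
  obtain a b where ab: "quotient_of r = (a, b)" by fastforce
  note R = farey_set_quotient_of[OF assms ab]
  have "1 / rat_of_nat Q \<le> 1 / of_int b"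
    using R(3,4) by (intro divide_left_mono) simp_all
  also have "\<dots> \<le> of_int a / of_int b"
    using R(1,4) by (intro divide_right_mono) simp_all
  finally show ?thesis using R(6) by simp
qed

abbreviation farey_list :: "nat \<Rightarrow> rat list" where
  "farey_list Q \<equiv> sorted_list_of_set (farey_set Q)"

lemma length_farey_list: "length (farey_list Q) = farey_N Q"
  by (simp add: farey_N_def)

lemma farey_list_nth_mem: "n < farey_N Q \<Longrightarrow> farey_list Q ! n \<in> farey_set Q"
  using finite_farey_set length_farey_list by (metis nth_mem set_sorted_list_of_set)

lemma farey_list_nth_strict_mono:
  "m < n \<Longrightarrow> n < farey_N Q \<Longrightarrow> farey_list Q ! m < farey_list Q ! n"
  using sorted_wrt_nth_less[OF strict_sorted_list_of_set] length_farey_list by metis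

lemma farey_list_nth_mono:
  "m \<le> n \<Longrightarrow> n < farey_N Q \<Longrightarrow> farey_list Q ! m \<le> farey_list Q ! n"
  using farey_list_nth_strict_mono by (metis order.order_iff_strict)

lemma farey_set_obtain_index:
  assumes "r \<in> farey_set Q"
  obtains n where "n < farey_N Q" and "farey_list Q ! n = r"
  using assms finite_farey_set length_farey_list by (metis in_set_conv_nth set_sorted_list_of_set)

lemma farey_p_q_eq:
  assumes "quotient_of (farey_list Q ! nat ((i - 1) mod int (farey_N Q))) = (a, b)"
  shows "farey_p Q i = a + (i - 1) div int (farey_N Q) * b" and "farey_q Q i = b"
  unfolding farey_p_def farey_q_def farey_gamma_def
  using quotient_of_add_of_int[OF assms] by simp_all

context
  fixes Q :: nat
  assumes Q: "1 \<le> Q"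
begin

lemma farey_N_pos: "1 \<le> farey_N Q"
  using finite_farey_set one_mem_farey_set Q unfolding farey_N_def
  by (metis card_0_eq empty_iff less_one linorder_not_less)

lemma farey_list_first: "farey_list Q ! 0 = 1 / of_nat Q"
proof -
  obtain m where m: "m < farey_N Q" "farey_list Q ! m = 1 / of_nat Q"
    using farey_set_obtain_index inverse_mem_farey_set[OF Q] by blast
  then have "farey_list Q ! 0 \<le> 1 / of_nat Q"
    using farey_list_nth_mono[of 0 m Q] by simp
  moreover have "1 / of_nat Q \<le> farey_list Q ! 0"
    using farey_set_ge_inverse farey_list_nth_mem farey_N_pos by simp
  ultimately show ?thesis by simp
qed

lemma farey_list_last: "farey_list Q ! (farey_N Q - 1) = 1"
proof -
  obtain m where m: "m < farey_N Q" "farey_list Q ! m = 1"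
    using farey_set_obtain_index one_mem_farey_set Q by blast
  then have "1 \<le> farey_list Q ! (farey_N Q - 1)"
    using farey_list_nth_mono[of m "farey_N Q - 1" Q] by simp
  moreover have "farey_list Q ! (farey_N Q - 1) \<le> 1"
    using farey_list_nth_mem[of "farey_N Q - 1"] farey_N_pos unfolding farey_set_def by simp
  ultimately show ?thesis by simp
qed

lemma farey_list_det:
  assumes "n + 1 < farey_N Q"
    and "quotient_of (farey_list Q ! n) = (a, b)" and "quotient_of (farey_list Q ! (n + 1)) = (c, d)"
  shows "b * c - a * d = 1"
proof (rule farey_neighbours_det[OF farey_list_nth_mem farey_list_nth_mem _ _ assms(2,3)])
  show "n < farey_N Q" "n + 1 < farey_N Q" "farey_list Q ! n < farey_list Q ! (n + 1)"
    using assms(1) farey_list_nth_strict_mono by simp_all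
  show "\<forall>z\<in>farey_set Q. \<not> (farey_list Q ! n < z \<and> z < farey_list Q ! (n + 1))"
  proof (intro ballI notI)
    fix z assume "z \<in> farey_set Q" and z: "farey_list Q ! n < z \<and> z < farey_list Q ! (n + 1)"
    then obtain m where m: "m < farey_N Q" "farey_list Q ! m = z"
      using farey_set_obtain_index by blast
    have "\<not> m \<le> n" using farey_list_nth_mono[of m n Q] m z assms(1) by auto
    moreover have "\<not> n + 1 \<le> m" using farey_list_nth_mono[of "n + 1" m Q] m z by auto
    ultimately show False by simp
  qed
qed

lemma farey_det_Suc: "farey_p Q (i + 1) * farey_q Q i - farey_p Q i * farey_q Q (i + 1) = 1"
proof -
  define N where "N = int (farey_N Q)"
  define t m where "t = (i - 1) div N" and "m = (i - 1) mod N"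
  have "1 \<le> N" using farey_N_pos N_def by simp
  have div_mod: "(r + s * N) div N = s \<and> (r + s * N) mod N = r" if "0 \<le> r" "r < N" for r s
    using that by simp
  have m: "0 \<le> m" "m < N" and i: "i - 1 = N * t + m"
    using \<open>1 \<le> N\<close> unfolding t_def m_def by simp_all
  obtain a b where ab: "quotient_of (farey_list Q ! nat m) = (a, b)" by fastforce
  then have p_q: "farey_p Q i = a + t * b" "farey_q Q i = b"
    using farey_p_q_eq unfolding t_def m_def N_def by simp_all
  show ?thesis
  proof (cases "m + 1 < N")
    case True
    obtain c d where cd: "quotient_of (farey_list Q ! (nat m + 1)) = (c, d)" by fastforce
    have i': "i + 1 - 1 = (m + 1) + t * N" using i by (simp add: algebra_simps)
    have "(i + 1 - 1) div N = t \<and> (i + 1 - 1) mod N = m + 1"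
      unfolding i' using True m by (intro div_mod) simp_all
    moreover have "nat (m + 1) = nat m + 1" using m by simp
    ultimately have "farey_p Q (i + 1) = c + t * d" "farey_q Q (i + 1) = d"
      using farey_p_q_eq[of Q "i + 1"] cd unfolding N_def by simp_all
    moreover have "b * c - a * d = 1"
      using farey_list_det[of "nat m"] True ab cd m unfolding N_def by simp
    ultimately show ?thesis using p_q by (simp add: algebra_simps)
  next
    case False
    then have "nat m = farey_N Q - 1" using m N_def by simp
    then have "a = 1" "b = 1" using ab farey_list_last by simp_all
    have i': "i + 1 - 1 = 0 + (t + 1) * N" using False m i by (simp add: algebra_simps)
    have "(i + 1 - 1) div N = t + 1 \<and> (i + 1 - 1) mod N = 0"
      unfolding i' using \<open>1 \<le> N\<close> by (intro div_mod) simp_all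
    then have "farey_p Q (i + 1) = 1 + (t + 1) * int Q" "farey_q Q (i + 1) = int Q"
      using farey_p_q_eq[of Q "i + 1"] farey_list_first quotient_of_inverse_of_nat[OF Q]
      unfolding N_def by simp_all
    then show ?thesis using p_q \<open>a = 1\<close> \<open>b = 1\<close> by (simp add: algebra_simps)
  qed
qed

end

lemma det_three_term_recurrence:
  fixes pa qa p0 q0 p1 q1 p2 q2 :: "'a::comm_ring_1"
  assumes "p1 * q0 - p0 * q1 = 1" and "p2 * q1 - p1 * q2 = 1"
  shows "p2 * qa - pa * q2 = (p2 * q0 - p0 * q2) * (p1 * qa - pa * q1) - (p0 * qa - pa * q0)"
proof -
  have "(p2 * qa - pa * q2) * (p1 * q0 - p0 * q1)
      = (p2 * q0 - p0 * q2) * (p1 * qa - pa * q1) - (p0 * qa - pa * q0) * (p2 * q1 - p1 * q2)"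
    by (simp add: algebra_simps)
  then show ?thesis using assms by simp
qed

lemma farey_nu_0: "farey_nu Q 0 i = 0"
  unfolding farey_nu_def by simp

lemma farey_nu_1: "1 \<le> Q \<Longrightarrow> farey_nu Q 1 i = 1"
  using farey_det_Suc[of Q "i - 1"] unfolding farey_nu_def by simp

lemma farey_nu_recurrence:
  assumes "1 \<le> Q"
  shows "farey_nu Q (n + 2) i = farey_nu Q 2 (i + int n) * farey_nu Q (n + 1) i - farey_nu Q n i"
proof -
  let ?j = "i + int n" and ?p = "farey_p Q" and ?q = "farey_q Q"
  have nu: "farey_nu Q (n + 2) i = ?p (?j + 1) * ?q (i - 1) - ?p (i - 1) * ?q (?j + 1)"
    "farey_nu Q 2 ?j = ?p (?j + 1) * ?q (?j - 1) - ?p (?j - 1) * ?q (?j + 1)"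
    "farey_nu Q (n + 1) i = ?p ?j * ?q (i - 1) - ?p (i - 1) * ?q ?j"
    "farey_nu Q n i = ?p (?j - 1) * ?q (i - 1) - ?p (i - 1) * ?q (?j - 1)"
    unfolding farey_nu_def by (simp_all add: algebra_simps)
  have "?p ?j * ?q (?j - 1) - ?p (?j - 1) * ?q ?j = 1"
    using farey_det_Suc[OF assms, of "?j - 1"] by simp
  from det_three_term_recurrence[OF this farey_det_Suc[OF assms, of ?j]]
  show ?thesis unfolding nu .
qed

lemma kron2_odd_Suc: "kron2 (2 * int n + 3) = (-1) ^ Suc n * kron2 (2 * int n + 1)"
proof -
  have "(2 * int n + 1) mod 8 = 2 * int (n mod 4) + 1" "(2 * int n + 3) mod 8 = 2 * int (Suc n mod 4) + 1"
    by presburger+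
  moreover have "n mod 4 \<in> {0, 1, 2, 3}" by auto
  moreover have "(-1 :: int) ^ Suc n = (if even (n mod 4) then -1 else 1)"
    by (simp add: minus_one_power_iff even_mod_4_div_2 flip: even_iff_mod_2_eq_zero) presburger
  ultimately show ?thesis
    unfolding kron2_def by (auto simp: mod_Suc even_add)
qed

lemma convK_signed_recurrence:
  fixes y c :: "nat \<Rightarrow> int"
  assumes y0: "y 0 = 0" and y1: "y 1 = 1"
    and rec: "\<And>n. y (n + 2) = c (n + 1) * y (n + 1) - y n"
  shows "y (n + 1) = kron2 (2 * int n + 1) * convK n (\<lambda>j. (-1) ^ j * c j)"
proof (induction n rule: less_induct)
  case (less n)
  consider "n = 0" | "n = 1" | m where "n = m + 2"
    by (metis One_nat_def add_2_eq_Suc' not0_implies_Suc)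
  then show ?case
  proof cases
    case 1
    then show ?thesis using y1 by (simp add: kron2_def)
  next
    case 2
    then show ?thesis using rec[of 0] y0 y1 by (simp add: kron2_def)
  next
    case 3
    let ?x = "\<lambda>j. (-1) ^ j * c j" and ?s = "\<lambda>n. kron2 (2 * int n + 1)"
    have s1: "?s (m + 1) = (-1) ^ Suc m * ?s m" and s2: "?s (m + 2) = (-1) ^ Suc (Suc m) * ?s (m + 1)"
      using kron2_odd_Suc[of m] kron2_odd_Suc[of "m + 1"] by (simp_all add: algebra_simps)
    have "y (n + 1) = c (m + 2) * y (m + 2) - y (m + 1)"
      using rec[of "m + 1"] 3 by (simp add: algebra_simps)
    also have "\<dots> = c (m + 2) * (?s (m + 1) * convK (m + 1) ?x) - ?s m * convK m ?x"
      using less 3 by simp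
    also have "\<dots> = ?s (m + 2) * (?x (m + 2) * convK (m + 1) ?x + convK m ?x)"
      unfolding s2 s1 by (simp add: algebra_simps)
    also have "\<dots> = ?s n * convK n ?x"
      using 3 by (simp add: numeral_2_eq_2)
    finally show ?thesis .
  qed
qed

theorem theorem1:
  fixes Q k :: nat and i :: int
  assumes "Q \<ge> 1" and "k \<ge> 1"
  shows "farey_nu Q k i =
           kron2 (2 * int k - 1) *
           convK (k - 1) (\<lambda>j. (-1) ^ j * farey_nu Q 2 (i + int j - 1))"
proof -
  have "farey_nu Q (n + 1) i =
      kron2 (2 * int n + 1) * convK n (\<lambda>j. (-1) ^ j * farey_nu Q 2 (i + int j - 1))" for n
  proof (rule convK_signed_recurrence)
    show "farey_nu Q 0 i = 0" "farey_nu Q 1 i = 1"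
      using farey_nu_0 farey_nu_1 assms(1) by simp_all
    show "farey_nu Q (n + 2) i =
        farey_nu Q 2 (i + int (n + 1) - 1) * farey_nu Q (n + 1) i - farey_nu Q n i" for n
      using farey_nu_recurrence[OF assms(1)] by simp
  qed
  from this[of "k - 1"] show ?thesis
    using assms(2) by (simp add: algebra_simps of_nat_diff)
qed

end
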